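(* For both Mixing methods $M$ (under the non-degeneracy assumption) and $M_\theta$ (no assumption), there is a constant $\tau>0$ such that, for their normalizers $y^*=y(V^* )$ and $y=y(V)$, $\|y-y^*\|^2\le\tau(f(V)-f^* )$.
   Context: Let $C\in\mathbb{R}^{n\times n}$ be symmetric with columns $c_i$ and $c_{ii}=0$, $f(V)=\langle C,V^TV\rangle$ over $V\in\mathbb{R}^{k\times n}$ with unit-norm columns ($\|\cdot\|$ the Euclidean norm), $V^*$ a global optimum of the SDP $\min_{X\succeq0}\langle C,X\rangle$ s.t. $X_{ii}=1$, and $f^*$ its optimal value. With $g_i=\sum_{j<i}c_{ij}\hat v_j+\sum_{j>i}c_{ij}v_j$ computed during one cyclic pass, the Mixing method $M$ uses normalizer $y_i=\|g_i\|$ and update $\hat v_i=-g_i/y_i$; the step-size version $M_\theta$, with $\theta\in(0,1/\max_i\|c_i\|_1)$ ($\|\cdot\|_1$ the $1$-norm), uses $y_i=\|v_i-\theta g_i\|$ and $\hat v_i=(v_i-\theta g_i)/y_i$. Non-degeneracy assumption (for $M$): all $\|g_i\|\ge\delta>0$ throughout. *)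

theory Defs
  imports "HOL-Analysis.Analysis"
begin

(* Columns v_0..v_{n-1} of V in R^k are represented as V :: nat => real^'k (indices < n);
   C is an n x n matrix given as nat => nat => real (indices < n). *)

definition unit_cols :: "nat \<Rightarrow> (nat \<Rightarrow> real^'k) \<Rightarrow> bool" where
  "unit_cols n V \<longleftrightarrow> (\<forall>i<n. norm (V i) = 1)"

definition objf :: "(nat \<Rightarrow> nat \<Rightarrow> real) \<Rightarrow> nat \<Rightarrow> (nat \<Rightarrow> real^'k) \<Rightarrow> real" where
  "objf C n V = (\<Sum>i<n. \<Sum>j<n. C i j * (V i \<bullet> V j))"

definition psd :: "nat \<Rightarrow> (nat \<Rightarrow> nat \<Rightarrow> real) \<Rightarrow> bool" where
  "psd n X \<longleftrightarrow> (\<forall>i<n. \<forall>j<n. X i j = X j i) \<and>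
     (\<forall>z::nat \<Rightarrow> real. 0 \<le> (\<Sum>i<n. \<Sum>j<n. z i * X i j * z j))"

definition sdp_opt :: "(nat \<Rightarrow> nat \<Rightarrow> real) \<Rightarrow> nat \<Rightarrow> real" where
  "sdp_opt C n = Inf {(\<Sum>i<n. \<Sum>j<n. C i j * X i j) | X. psd n X \<and> (\<forall>i<n. X i i = 1)}"

definition mix_g :: "(nat \<Rightarrow> nat \<Rightarrow> real) \<Rightarrow> nat \<Rightarrow> (nat \<Rightarrow> real^'k) \<Rightarrow> nat \<Rightarrow> real^'k" where
  "mix_g C n W i = (\<Sum>j\<in>{..<n} - {i}. C i j *\<^sub>R W j)"

(* state after updating coordinates 0..m-1 of one cyclic pass; upd g v = new v_i *)
primrec pass_state :: "(real^'k \<Rightarrow> real^'k \<Rightarrow> real^'k) \<Rightarrow> (nat \<Rightarrow> nat \<Rightarrow> real) \<Rightarrow> nat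
    \<Rightarrow> (nat \<Rightarrow> real^'k) \<Rightarrow> nat \<Rightarrow> (nat \<Rightarrow> real^'k)" where
  "pass_state upd C n V 0 = V"
| "pass_state upd C n V (Suc m) =
     (let W = pass_state upd C n V m in W(m := upd (mix_g C n W m) (W m)))"

(* g_i = sum_{j<i} c_ij vhat_j + sum_{j>i} c_ij v_j during the pass *)
definition g_pass :: "(real^'k \<Rightarrow> real^'k \<Rightarrow> real^'k) \<Rightarrow> (nat \<Rightarrow> nat \<Rightarrow> real) \<Rightarrow> nat
    \<Rightarrow> (nat \<Rightarrow> real^'k) \<Rightarrow> nat \<Rightarrow> real^'k" where
  "g_pass upd C n V i = mix_g C n (pass_state upd C n V i) i"

definition updM :: "real^'k \<Rightarrow> real^'k \<Rightarrow> real^'k" where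
  "updM g v = - ((1 / norm g) *\<^sub>R g)"

definition updT :: "real \<Rightarrow> real^'k \<Rightarrow> real^'k \<Rightarrow> real^'k" where
  "updT \<theta> g v = (1 / norm (v - \<theta> *\<^sub>R g)) *\<^sub>R (v - \<theta> *\<^sub>R g)"

definition yM :: "(nat \<Rightarrow> nat \<Rightarrow> real) \<Rightarrow> nat \<Rightarrow> (nat \<Rightarrow> real^'k) \<Rightarrow> nat \<Rightarrow> real" where
  "yM C n V i = norm (g_pass updM C n V i)"

definition yT :: "real \<Rightarrow> (nat \<Rightarrow> nat \<Rightarrow> real) \<Rightarrow> nat \<Rightarrow> (nat \<Rightarrow> real^'k) \<Rightarrow> nat \<Rightarrow> real" where
  "yT \<theta> C n V i = norm (V i - \<theta> *\<^sub>R g_pass (updT \<theta>) C n V i)"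

definition nondegM :: "real \<Rightarrow> (nat \<Rightarrow> nat \<Rightarrow> real) \<Rightarrow> nat \<Rightarrow> (nat \<Rightarrow> real^'k) \<Rightarrow> bool" where
  "nondegM \<delta> C n V \<longleftrightarrow> (\<forall>i<n. \<delta> \<le> norm (g_pass updM C n V i))"

end

theory Submission
  imports Defs
begin

text \<open>At the optimum \<open>V\<^sup>*\<close> the matrix \<open>S = C + diag y\<^sup>*\<close>, \<open>y\<^sup>*\<^sub>i = -\<Sum>\<^sub>j c\<^sub>i\<^sub>j v\<^sup>*\<^sub>i \<bullet> v\<^sup>*\<^sub>j\<close>,
  is positive semidefinite (first-order optimality along feasible curves) and annihilates \<open>V\<^sup>*\<close>,
  so \<open>g\<^sub>i(V\<^sup>*) = -y\<^sup>*\<^sub>i v\<^sup>*\<^sub>i\<close>: \<open>V\<^sup>*\<close> is a fixed point of both methods, with normalizers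
  \<open>y\<^sup>*\<^sub>i\<close> and \<open>1 + \<theta> y\<^sup>*\<^sub>i\<close>. For arbitrary \<open>V\<close> the gap \<open>f(V) - f\<^sup>*\<close> is \<open>\<Sum>\<^sub>c z\<^sub>c\<^sup>T S z\<^sub>c\<close> over
  the coordinate rows \<open>z\<^sub>c\<close> of \<open>V\<close>, and Cauchy--Schwarz for \<open>S\<close> bounds \<open>\<Sum>\<^sub>i \<parallel>(S V\<^sup>T)\<^sub>i\<parallel>\<^sup>2\<close>
  by \<open>(\<Sum>\<^sub>i y\<^sup>*\<^sub>i) (f(V) - f\<^sup>*)\<close>. The normalizer error is at most \<open>\<parallel>g\<^sub>i + y\<^sup>*\<^sub>i v\<^sub>i\<parallel>\<close>, which
  differs from \<open>(S V\<^sup>T)\<^sub>i\<close> only through the movement of the columns already updated in the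
  pass; that movement is bounded by the decrease of \<open>f\<close> along the pass, hence by
  \<open>(f(V) - f\<^sup>*)/\<delta>\<close> for \<open>M\<close> and by \<open>\<theta> (f(V) - f\<^sup>*)\<close> for \<open>M\<^sub>\<theta>\<close>.\<close>

section \<open>Positive semidefinite matrices\<close>

definition qform :: "nat \<Rightarrow> (nat \<Rightarrow> nat \<Rightarrow> real) \<Rightarrow> (nat \<Rightarrow> real) \<Rightarrow> real" where
  "qform n S x = (\<Sum>l<n. \<Sum>m<n. x l * S l m * x m)"

lemma psd_iff_qform: "psd n S \<longleftrightarrow> (\<forall>i<n. \<forall>j<n. S i j = S j i) \<and> (\<forall>x. 0 \<le> qform n S x)"
  unfolding psd_def qform_def ..

lemma if_zero_mult_real:
  "(if P then a else 0) * b = (if P then a * b else (0::real))"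
  "b * (if P then a else 0) = (if P then b * a else (0::real))"
  by simp_all

lemma sum_if_zero_const_cond:
  "(\<Sum>x\<in>A. if P then f x else 0) = (if P then sum f A else (0::real))"
  by simp

lemma qform_indicator:
  assumes "i < n"
  shows "qform n S (\<lambda>l. if l = i then 1 else 0) = S i i"
  using assms by (simp add: qform_def if_zero_mult_real sum_if_zero_const_cond cong: if_cong)

lemma qform_minus_indicator:
  assumes sym: "\<forall>i<n. \<forall>j<n. S i j = S j i" and i: "i < n"
  shows "qform n S (\<lambda>l. x l - t * (if l = i then 1 else 0))
    = qform n S x - 2 * t * (\<Sum>j<n. S i j * x j) + t\<^sup>2 * S i i"
proof -
  let ?e = "\<lambda>l. if l = i then 1 else 0 :: real"
  have pointwise: "(x l - t * ?e l) * S l m * (x m - t * ?e m)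
      = x l * S l m * x m - t * (?e l * S l m * x m) - t * (x l * S l m * ?e m)
        + t\<^sup>2 * (?e l * S l m * ?e m)" for l m
    by (simp add: algebra_simps power2_eq_square)
  have row: "(\<Sum>l<n. \<Sum>m<n. ?e l * S l m * x m) = (\<Sum>j<n. S i j * x j)"
    using i by (simp add: if_zero_mult_real sum_if_zero_const_cond cong: if_cong)
  have "(\<Sum>l<n. \<Sum>m<n. x l * S l m * ?e m) = (\<Sum>l<n. x l * S l i)"
    using i by (simp add: if_zero_mult_real sum_if_zero_const_cond cong: if_cong)
  also have "\<dots> = (\<Sum>j<n. S i j * x j)"
    using sym i by (intro sum.cong) auto
  finally have col: "(\<Sum>l<n. \<Sum>m<n. x l * S l m * ?e m) = (\<Sum>j<n. S i j * x j)" .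
  have diag: "(\<Sum>l<n. \<Sum>m<n. ?e l * S l m * ?e m) = S i i"
    using qform_indicator[OF i] by (simp add: qform_def)
  show ?thesis
    unfolding qform_def pointwise
    by (simp only: sum.distrib sum_subtractf sum_distrib_left[symmetric] row col diag)
qed

lemma sq_le_of_quadratic_nonneg:
  fixes a b c :: real
  assumes a: "0 \<le> a" and nonneg: "\<And>t. 0 \<le> c - 2 * t * b + t\<^sup>2 * a"
  shows "b\<^sup>2 \<le> a * c"
proof (cases "a = 0")
  case True
  have "b = 0"
  proof (rule ccontr)
    assume "b \<noteq> 0"
    then have "c - 2 * ((c + 1) / (2 * b)) * b = -1" by (simp add: field_simps)
    with nonneg[of "(c + 1) / (2 * b)"] True show False by simp
  qed
  with True show ?thesis by simp
next
  case False
  with a have a_pos: "0 < a" by simp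
  have "c - 2 * (b / a) * b + (b / a)\<^sup>2 * a = c - b\<^sup>2 / a"
    using a_pos by (simp add: field_simps power2_eq_square)
  with nonneg[of "b / a"] have "b\<^sup>2 / a \<le> c" by simp
  with a_pos show ?thesis by (simp add: field_simps)
qed

lemma psd_diag_nonneg:
  assumes "psd n S" "i < n"
  shows "0 \<le> S i i"
proof -
  from assms(1) have "0 \<le> qform n S (\<lambda>l. if l = i then 1 else 0)"
    by (simp add: psd_iff_qform)
  with assms(2) show ?thesis by (simp add: qform_indicator)
qed

lemma psd_row_sq_le:
  assumes psd: "psd n S" and i: "i < n"
  shows "(\<Sum>j<n. S i j * x j)\<^sup>2 \<le> S i i * qform n S x"
proof (rule sq_le_of_quadratic_nonneg)
  show "0 \<le> S i i" using psd i by (rule psd_diag_nonneg)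
  from psd have sym: "\<forall>i<n. \<forall>j<n. S i j = S j i" by (simp add: psd_iff_qform)
  show "0 \<le> qform n S x - 2 * t * (\<Sum>j<n. S i j * x j) + t\<^sup>2 * S i i" for t
  proof -
    have "0 \<le> qform n S (\<lambda>l. x l - t * (if l = i then 1 else 0))"
      using psd unfolding psd_iff_qform by blast
    then show ?thesis unfolding qform_minus_indicator[OF sym i] .
  qed
qed

lemma psd_entry_sq_le:
  assumes "psd n S" "i < n" "j < n"
  shows "(S i j)\<^sup>2 \<le> S i i * S j j"
  using psd_row_sq_le[OF assms(1,2), of "\<lambda>l. if l = j then 1 else 0"] assms(3)
  by (simp add: qform_indicator if_zero_mult_real sum_if_zero_const_cond cong: if_cong)

lemma psd_scale:
  assumes "psd n X"
  shows "psd n (\<lambda>i j. a i * X i j * a j)"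
proof -
  have "qform n (\<lambda>i j. a i * X i j * a j) w = qform n X (\<lambda>i. w i * a i)" for w
    by (simp add: qform_def ac_simps)
  with assms show ?thesis by (simp add: psd_iff_qform)
qed

lemma psd_add_rank_one:
  assumes "psd n X" "0 \<le> t"
  shows "psd n (\<lambda>i j. X i j + t * (z i * z j))"
proof -
  have "qform n (\<lambda>i j. X i j + t * (z i * z j)) w = qform n X w + t * (\<Sum>i<n. w i * z i)\<^sup>2" for w
    by (simp add: qform_def distrib_left distrib_right sum.distrib sum_distrib_left
        power2_eq_square sum_product ac_simps)
  with assms show ?thesis by (simp add: psd_iff_qform)
qed

lemma qform_gram:
  fixes V :: "nat \<Rightarrow> 'a::real_inner"
  shows "qform n (\<lambda>i j. V i \<bullet> V j) w = (norm (\<Sum>i<n. w i *\<^sub>R V i))\<^sup>2"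
  unfolding qform_def power2_norm_eq_inner
  by (simp add: inner_sum_left inner_sum_right sum_distrib_left inner_commute ac_simps)

lemma psd_gram: "psd n (\<lambda>i j. (V i :: 'a::real_inner) \<bullet> V j)"
  by (simp add: psd_iff_qform qform_gram inner_commute)

lemma bdd_below_sdp_values:
  "bdd_below {(\<Sum>i<n. \<Sum>j<n. C i j * X i j) | X. psd n X \<and> (\<forall>i<n. X i i = 1)}"
proof (rule bdd_belowI)
  fix x assume "x \<in> {(\<Sum>i<n. \<Sum>j<n. C i j * X i j) | X. psd n X \<and> (\<forall>i<n. X i i = 1)}"
  then obtain X where x: "x = (\<Sum>i<n. \<Sum>j<n. C i j * X i j)"
    and psd: "psd n X" and diag: "\<forall>i<n. X i i = 1" by blast
  have "- \<bar>C i j\<bar> \<le> C i j * X i j" if "i < n" "j < n" for i j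
  proof -
    have "\<bar>X i j\<bar> \<le> 1"
      using psd_entry_sq_le[OF psd that] diag that by (simp add: abs_square_le_1)
    then have "\<bar>C i j * X i j\<bar> \<le> \<bar>C i j\<bar>" by (simp add: abs_mult mult_left_le)
    then show ?thesis by linarith
  qed
  then have "(\<Sum>i<n. \<Sum>j<n. - \<bar>C i j\<bar>) \<le> x" unfolding x by (intro sum_mono) auto
  then show "- (\<Sum>i<n. \<Sum>j<n. \<bar>C i j\<bar>) \<le> x" by (simp add: sum_negf)
qed

lemma sdp_opt_le:
  "psd n X \<Longrightarrow> \<forall>i<n. X i i = 1 \<Longrightarrow> sdp_opt C n \<le> (\<Sum>i<n. \<Sum>j<n. C i j * X i j)"
  unfolding sdp_opt_def by (rule cInf_lower[OF _ bdd_below_sdp_values]) blast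

lemma sdp_opt_le_objf: "unit_cols n V \<Longrightarrow> sdp_opt C n \<le> objf C n V"
  unfolding objf_def unit_cols_def by (rule sdp_opt_le[OF psd_gram]) (simp add: norm_eq_1)

section \<open>First-order optimality\<close>

text \<open>The multipliers \<open>y\<^sup>*\<close> of the constraints \<open>X\<^sub>i\<^sub>i = 1\<close> and the dual slack matrix
  \<open>S = C + diag y\<^sup>*\<close>.\<close>

definition dual_y :: "(nat \<Rightarrow> nat \<Rightarrow> real) \<Rightarrow> nat \<Rightarrow> (nat \<Rightarrow> 'a::real_inner) \<Rightarrow> nat \<Rightarrow> real" where
  "dual_y C n V i = - (\<Sum>j<n. C i j * (V i \<bullet> V j))"

definition dual_slack ::
    "(nat \<Rightarrow> nat \<Rightarrow> real) \<Rightarrow> nat \<Rightarrow> (nat \<Rightarrow> 'a::real_inner) \<Rightarrow> nat \<Rightarrow> nat \<Rightarrow> real" where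
  "dual_slack C n V i j = C i j + (if i = j then dual_y C n V i else 0)"

lemma qform_dual_slack:
  "qform n (dual_slack C n V) z = qform n C z + (\<Sum>i<n. dual_y C n V i * (z i)\<^sup>2)"
proof -
  have "z i * dual_slack C n V i j * z j
      = z i * C i j * z j + (if j = i then dual_y C n V i * (z i)\<^sup>2 else 0)" for i j
    by (auto simp: dual_slack_def power2_eq_square algebra_simps)
  then show ?thesis by (simp add: qform_def sum.distrib)
qed

definition gram_perturb :: "(nat \<Rightarrow> 'a::real_inner) \<Rightarrow> (nat \<Rightarrow> real) \<Rightarrow> real \<Rightarrow> nat \<Rightarrow> nat \<Rightarrow> real" where
  "gram_perturb V z t i j =
     (V i \<bullet> V j + t * (z i * z j)) / (sqrt (1 + t * (z i)\<^sup>2) * sqrt (1 + t * (z j)\<^sup>2))"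

lemma psd_gram_perturb:
  assumes "0 \<le> t"
  shows "psd n (gram_perturb V z t)"
proof -
  define a where "a i = inverse (sqrt (1 + t * (z i)\<^sup>2))" for i
  have "gram_perturb V z t = (\<lambda>i j. a i * (V i \<bullet> V j + t * (z i * z j)) * a j)"
    by (simp add: fun_eq_iff gram_perturb_def a_def divide_inverse ac_simps)
  then show ?thesis using psd_scale[OF psd_add_rank_one[OF psd_gram assms]] by simp
qed

lemma gram_perturb_diag:
  assumes "norm (V i) = 1" "0 \<le> t"
  shows "gram_perturb V z t i i = 1"
proof -
  have "0 < 1 + t * (z i)\<^sup>2" using assms(2) by (simp add: add_pos_nonneg)
  with assms(1) show ?thesis by (simp add: gram_perturb_def norm_eq_1 power2_eq_square)
qed

lemma has_real_derivative_gram_perturb: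
  "((\<lambda>t. gram_perturb V z t i j) has_real_derivative
      z i * z j - (V i \<bullet> V j) * ((z i)\<^sup>2 + (z j)\<^sup>2) / 2) (at 0)"
  unfolding gram_perturb_def
  by (rule derivative_eq_intros refl | simp)+

lemma deriv_nonneg_at_right_min:
  fixes f :: "real \<Rightarrow> real"
  assumes deriv: "(f has_real_derivative L) (at x)" and min: "\<And>t. x < t \<Longrightarrow> f x \<le> f t"
  shows "0 \<le> L"
proof (rule ccontr)
  assume "\<not> 0 \<le> L"
  with DERIV_neg_dec_right[OF deriv] obtain d where "0 < d" "\<And>h. 0 < h \<Longrightarrow> h < d \<Longrightarrow> f (x + h) < f x"
    by force
  then have "f (x + d / 2) < f x" by simp
  with min[of "x + d / 2"] \<open>0 < d\<close> show False by simp
qed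

lemma sum_gram_perturb_deriv_eq:
  assumes symC: "\<forall>i<n. \<forall>j<n. C i j = C j i"
  shows "(\<Sum>i<n. \<Sum>j<n. C i j * (z i * z j - (V i \<bullet> V j) * ((z i)\<^sup>2 + (z j)\<^sup>2) / 2))
    = qform n (dual_slack C n V) z"
proof -
  let ?A = "\<Sum>i<n. \<Sum>j<n. C i j * (V i \<bullet> V j) * (z i)\<^sup>2"
  have swap: "(\<Sum>i<n. \<Sum>j<n. C i j * (V i \<bullet> V j) * (z j)\<^sup>2) = ?A"
    by (subst sum.swap) (use symC in \<open>auto simp: inner_commute intro!: sum.cong\<close>)
  have "C i j * (z i * z j - (V i \<bullet> V j) * ((z i)\<^sup>2 + (z j)\<^sup>2) / 2)
      = z i * C i j * z j - C i j * (V i \<bullet> V j) * (z i)\<^sup>2 / 2 - C i j * (V i \<bullet> V j) * (z j)\<^sup>2 / 2"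
    for i j by (simp add: field_simps)
  then have "(\<Sum>i<n. \<Sum>j<n. C i j * (z i * z j - (V i \<bullet> V j) * ((z i)\<^sup>2 + (z j)\<^sup>2) / 2))
      = qform n C z - ?A / 2 - (\<Sum>i<n. \<Sum>j<n. C i j * (V i \<bullet> V j) * (z j)\<^sup>2) / 2"
    by (simp only: qform_def sum_subtractf sum_divide_distrib)
  also have "\<dots> = qform n C z + (\<Sum>i<n. dual_y C n V i * (z i)\<^sup>2)"
    unfolding swap by (simp add: dual_y_def sum_distrib_right sum_negf mult.assoc)
  finally show ?thesis by (simp add: qform_dual_slack)
qed

text \<open>Rescaling the Gram matrix of the optimum plus \<open>t z z\<^sup>T\<close> to unit diagonal gives a feasible
  curve through the optimum; its right derivative at \<open>t = 0\<close> is \<open>z\<^sup>T S z\<close>, which therefore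
  cannot be negative.\<close>

lemma psd_dual_slack_at_opt:
  fixes V :: "nat \<Rightarrow> real^'k"
  assumes symC: "\<forall>i<n. \<forall>j<n. C i j = C j i"
    and unit: "unit_cols n V" and opt: "objf C n V = sdp_opt C n"
  shows "psd n (dual_slack C n V)"
  unfolding psd_iff_qform
proof (intro conjI allI impI)
  show "dual_slack C n V i j = dual_slack C n V j i" if "i < n" "j < n" for i j
    using symC that by (simp add: dual_slack_def)
  fix z
  define F where "F t = (\<Sum>i<n. \<Sum>j<n. C i j * gram_perturb V z t i j)" for t
  have "F 0 = sdp_opt C n"
    using opt by (simp add: F_def gram_perturb_def objf_def)
  moreover have "sdp_opt C n \<le> F t" if "0 < t" for t
    unfolding F_def using that unit
    by (intro sdp_opt_le psd_gram_perturb) (auto simp: unit_cols_def gram_perturb_diag)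
  moreover have "(F has_real_derivative qform n (dual_slack C n V) z) (at 0)"
    unfolding F_def sum_gram_perturb_deriv_eq[OF symC, symmetric]
    by (intro DERIV_sum DERIV_cmult has_real_derivative_gram_perturb)
  ultimately show "0 \<le> qform n (dual_slack C n V) z"
    by (intro deriv_nonneg_at_right_min[of F]) auto
qed

section \<open>One cyclic pass\<close>

lemma mix_g_eq_sum:
  assumes "i < n" "C i i = 0"
  shows "mix_g C n W i = (\<Sum>j<n. C i j *\<^sub>R W j)"
  using assms by (simp add: mix_g_def sum.remove[of "{..<n}" i])

lemma mix_g_fun_upd_self: "mix_g C n (W(i := u)) i = mix_g C n W i"
  unfolding mix_g_def by (intro sum.cong) auto

lemma norm_mix_g_le:
  assumes "unit_cols n W"
  shows "norm (mix_g C n W i) \<le> (\<Sum>j<n. \<bar>C i j\<bar>)"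
proof -
  have "norm (mix_g C n W i) \<le> (\<Sum>j\<in>{..<n} - {i}. norm (C i j *\<^sub>R W j))"
    unfolding mix_g_def by (rule norm_sum)
  also have "\<dots> = (\<Sum>j\<in>{..<n} - {i}. \<bar>C i j\<bar>)"
    using assms by (intro sum.cong) (auto simp: unit_cols_def)
  also have "\<dots> \<le> (\<Sum>j<n. \<bar>C i j\<bar>)" by (intro sum_mono2) auto
  finally show ?thesis .
qed

lemma step_size_norm_mix_g_less:
  assumes symC: "\<forall>i<n. \<forall>j<n. C i j = C j i" and \<theta>: "0 \<le> \<theta>"
    and \<theta>C: "\<forall>i<n. \<theta> * (\<Sum>j<n. \<bar>C j i\<bar>) < 1" and unit: "unit_cols n W" and m: "m < n"
  shows "\<theta> * norm (mix_g C n W m) < 1"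
proof -
  have "\<theta> * norm (mix_g C n W m) \<le> \<theta> * (\<Sum>j<n. \<bar>C m j\<bar>)"
    using norm_mix_g_le[OF unit] \<theta> by (simp add: mult_left_mono)
  also have "\<dots> = \<theta> * (\<Sum>j<n. \<bar>C j m\<bar>)"
    using symC m by (metis (no_types, lifting) lessThan_iff sum.cong)
  also have "\<dots> < 1" using \<theta>C m by simp
  finally show ?thesis .
qed

lemma objf_split:
  assumes symC: "\<forall>i<n. \<forall>j<n. C i j = C j i" and diagC: "\<forall>i<n. C i i = 0" and m: "m < n"
  shows "objf C n W = (\<Sum>i\<in>{..<n}-{m}. \<Sum>j\<in>{..<n}-{m}. C i j * (W i \<bullet> W j))
    + 2 * (W m \<bullet> mix_g C n W m)"
proof -
  have row: "(\<Sum>j<n. C m j * (W m \<bullet> W j)) = W m \<bullet> mix_g C n W m"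
    using m diagC by (simp add: mix_g_eq_sum inner_sum_right)
  have col: "(\<Sum>i\<in>{..<n}-{m}. C i m * (W i \<bullet> W m)) = W m \<bullet> mix_g C n W m"
    unfolding mix_g_def using symC m by (auto simp: inner_sum_right inner_commute intro!: sum.cong)
  have "objf C n W = (\<Sum>j<n. C m j * (W m \<bullet> W j)) + (\<Sum>i\<in>{..<n}-{m}. \<Sum>j<n. C i j * (W i \<bullet> W j))"
    unfolding objf_def using m by (simp add: sum.remove[of "{..<n}" m])
  also have "(\<Sum>i\<in>{..<n}-{m}. \<Sum>j<n. C i j * (W i \<bullet> W j)) =
      (\<Sum>i\<in>{..<n}-{m}. C i m * (W i \<bullet> W m) + (\<Sum>j\<in>{..<n}-{m}. C i j * (W i \<bullet> W j)))"
    using m by (intro sum.cong refl) (simp add: sum.remove[of "{..<n}" m])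
  finally show ?thesis unfolding row sum.distrib col by simp
qed

lemma objf_fun_upd:
  assumes symC: "\<forall>i<n. \<forall>j<n. C i j = C j i" and diagC: "\<forall>i<n. C i i = 0" and m: "m < n"
  shows "objf C n W - objf C n (W(m := u)) = 2 * ((W m - u) \<bullet> mix_g C n W m)"
proof -
  have "(\<Sum>i\<in>{..<n}-{m}. \<Sum>j\<in>{..<n}-{m}. C i j * ((W(m := u)) i \<bullet> (W(m := u)) j)) =
      (\<Sum>i\<in>{..<n}-{m}. \<Sum>j\<in>{..<n}-{m}. C i j * (W i \<bullet> W j))"
    by (intro sum.cong refl) auto
  then show ?thesis
    unfolding objf_split[OF symC diagC m, of W] objf_split[OF symC diagC m, of "W(m := u)"]
    by (simp add: mix_g_fun_upd_self inner_diff_left algebra_simps)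
qed

lemma pass_state_apply:
  "pass_state upd C n V m j = (if j < m then pass_state upd C n V (Suc j) j else V j)"
  by (induction m) (auto simp: Let_def)

lemma pass_state_Suc_eq:
  "pass_state upd C n V (Suc m) = (pass_state upd C n V m)(m := upd (g_pass upd C n V m) (V m))"
  using pass_state_apply[of upd C n V m m] by (simp add: Let_def g_pass_def)

lemma pass_state_fixed:
  assumes "\<And>m. m < n \<Longrightarrow> pass_state upd C n V m = V \<Longrightarrow> upd (mix_g C n V m) (V m) = V m"
  shows "m \<le> n \<Longrightarrow> pass_state upd C n V m = V"
  using assms by (induction m) (auto simp: Let_def)

text \<open>By \<open>objf_fun_upd\<close>, \<open>2 (w - upd g w) \<bullet> g\<close> is the decrease of the objective when the
  column \<open>w\<close> is replaced by \<open>upd g w\<close>.\<close>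

definition sufficient_decrease ::
    "real \<Rightarrow> (real^'k \<Rightarrow> real^'k \<Rightarrow> real^'k) \<Rightarrow> real^'k \<Rightarrow> real^'k \<Rightarrow> bool" where
  "sufficient_decrease \<kappa> upd g w \<longleftrightarrow>
     norm (upd g w) = 1 \<and> \<kappa> * (norm (upd g w - w))\<^sup>2 \<le> 2 * ((w - upd g w) \<bullet> g)"

definition pass_displacement ::
    "(real^'k \<Rightarrow> real^'k \<Rightarrow> real^'k) \<Rightarrow> (nat \<Rightarrow> nat \<Rightarrow> real) \<Rightarrow> nat \<Rightarrow> (nat \<Rightarrow> real^'k) \<Rightarrow> real" where
  "pass_displacement upd C n V = (\<Sum>j<n. (norm (pass_state upd C n V (Suc j) j - V j))\<^sup>2)"

lemma pass_descent:
  fixes V :: "nat \<Rightarrow> real^'k"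
  assumes symC: "\<forall>i<n. \<forall>j<n. C i j = C j i" and diagC: "\<forall>i<n. C i i = 0"
    and unit: "unit_cols n V"
    and step: "\<And>m. m < n \<Longrightarrow> unit_cols n (pass_state upd C n V m) \<Longrightarrow>
       sufficient_decrease \<kappa> upd (g_pass upd C n V m) (V m)"
  shows "k \<le> n \<Longrightarrow> unit_cols n (pass_state upd C n V k) \<and>
     \<kappa> * (\<Sum>m<k. (norm (pass_state upd C n V (Suc m) m - V m))\<^sup>2)
       \<le> objf C n V - objf C n (pass_state upd C n V k)"
proof (induction k)
  case 0
  then show ?case using unit by simp
next
  case (Suc k)
  let ?W = "pass_state upd C n V k" and ?g = "g_pass upd C n V k"
  let ?u = "upd ?g (V k)"
  have k: "k < n" using Suc.prems by simp
  with Suc.IH have unit_k: "unit_cols n ?W"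
    and IH: "\<kappa> * (\<Sum>m<k. (norm (pass_state upd C n V (Suc m) m - V m))\<^sup>2) \<le> objf C n V - objf C n ?W"
    by auto
  have u: "norm ?u = 1" and dec: "\<kappa> * (norm (?u - V k))\<^sup>2 \<le> 2 * ((V k - ?u) \<bullet> ?g)"
    using step[OF k unit_k] by (auto simp: sufficient_decrease_def)
  have W_Suc: "pass_state upd C n V (Suc k) = ?W(k := ?u)" by (rule pass_state_Suc_eq)
  have "?W k = V k" by (subst pass_state_apply) simp
  then have "objf C n ?W - objf C n (?W(k := ?u)) = 2 * ((V k - ?u) \<bullet> ?g)"
    using objf_fun_upd[OF symC diagC k, of ?W ?u] by (simp add: g_pass_def)
  moreover have "\<kappa> * (\<Sum>m<Suc k. (norm (pass_state upd C n V (Suc m) m - V m))\<^sup>2)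
      = \<kappa> * (\<Sum>m<k. (norm (pass_state upd C n V (Suc m) m - V m))\<^sup>2) + \<kappa> * (norm (?u - V k))\<^sup>2"
    unfolding sum.lessThan_Suc distrib_left W_Suc by simp
  moreover have "unit_cols n (?W(k := ?u))" using unit_k u by (simp add: unit_cols_def)
  ultimately show ?case using IH dec unfolding W_Suc by linarith
qed

lemma pass_displacement_le:
  fixes V :: "nat \<Rightarrow> real^'k"
  assumes "\<forall>i<n. \<forall>j<n. C i j = C j i" "\<forall>i<n. C i i = 0" "unit_cols n V"
    and "\<And>m. m < n \<Longrightarrow> unit_cols n (pass_state upd C n V m) \<Longrightarrow>
       sufficient_decrease \<kappa> upd (g_pass upd C n V m) (V m)"
  shows "\<kappa> * pass_displacement upd C n V \<le> objf C n V - sdp_opt C n"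
  using pass_descent[OF assms order_refl] sdp_opt_le_objf[of n "pass_state upd C n V n" C]
  unfolding pass_displacement_def by linarith

lemma sufficient_decrease_updM:
  fixes w g :: "real^'k"
  assumes w: "norm w = 1" and \<delta>: "0 < \<delta>" "\<delta> \<le> norm g"
  shows "sufficient_decrease \<delta> updM g w"
proof -
  define u where "u = (1 / norm g) *\<^sub>R g"
  have ng: "0 < norm g" using \<delta> by linarith
  then have u1: "norm u = 1" and g: "g = norm g *\<^sub>R u" by (simp_all add: u_def)
  have upd: "updM g w = - u" by (simp add: updM_def u_def)
  have "norm g * (norm (- u - w))\<^sup>2 = 2 * ((w - - u) \<bullet> (norm g *\<^sub>R u))"
    using u1 w unfolding power2_norm_eq_inner
    by (simp add: inner_add_left inner_add_right inner_commute norm_eq_1 algebra_simps)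
  then have "norm g * (norm (updM g w - w))\<^sup>2 = 2 * ((w - updM g w) \<bullet> g)"
    unfolding upd by (simp only: g[symmetric])
  moreover have "\<delta> * (norm (updM g w - w))\<^sup>2 \<le> norm g * (norm (updM g w - w))\<^sup>2"
    using \<delta> by (intro mult_right_mono) auto
  ultimately show ?thesis using u1 upd by (simp add: sufficient_decrease_def)
qed

lemma sufficient_decrease_updT:
  fixes w g :: "real^'k"
  assumes w: "norm w = 1" and \<theta>: "0 < \<theta>" "\<theta> * norm g < 1"
  shows "sufficient_decrease (1 / \<theta>) (updT \<theta>) g w"
proof -
  define y where "y = norm (w - \<theta> *\<^sub>R g)"
  define u where "u = updT \<theta> g w"
  have "norm (\<theta> *\<^sub>R g) < 1" using \<theta> by simp
  then have y: "0 < y" using norm_triangle_ineq2[of w "\<theta> *\<^sub>R g"] w unfolding y_def by linarith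
  then have u1: "norm u = 1" by (simp add: u_def updT_def y_def[symmetric])
  have z: "w - \<theta> *\<^sub>R g = y *\<^sub>R u" using y by (simp add: u_def updT_def y_def[symmetric])
  have "g = (1 / \<theta>) *\<^sub>R (\<theta> *\<^sub>R g)" using \<theta> by simp
  also have "\<theta> *\<^sub>R g = w - y *\<^sub>R u" using z by (simp add: algebra_simps)
  finally have g: "g = (1 / \<theta>) *\<^sub>R (w - y *\<^sub>R u)" .
  have sq: "(norm (u - w))\<^sup>2 = 2 * (1 - u \<bullet> w)"
    using u1 w unfolding power2_norm_eq_inner
    by (simp add: inner_diff_left inner_diff_right inner_commute norm_eq_1)
  have "2 * ((w - u) \<bullet> g) = (1 + y) / \<theta> * (norm (u - w))\<^sup>2"
    using u1 w \<theta> unfolding g sq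
    by (simp add: inner_diff_left inner_diff_right inner_commute norm_eq_1 field_simps)
  moreover have "1 / \<theta> * (norm (u - w))\<^sup>2 \<le> (1 + y) / \<theta> * (norm (u - w))\<^sup>2"
    using \<theta> y by (intro mult_right_mono divide_right_mono) auto
  ultimately show ?thesis using u1 unfolding sufficient_decrease_def u_def by simp
qed

lemma norm_add_sq_le:
  fixes a b :: "'a::real_normed_vector"
  shows "(norm (a + b))\<^sup>2 \<le> 2 * (norm a)\<^sup>2 + 2 * (norm b)\<^sup>2"
proof -
  have "(norm (a + b))\<^sup>2 \<le> (norm a + norm b)\<^sup>2"
    by (simp add: norm_triangle_ineq power_mono)
  also have "\<dots> \<le> 2 * (norm a)\<^sup>2 + 2 * (norm b)\<^sup>2"
    using zero_le_power2[of "norm a - norm b"] unfolding power2_sum power2_diff by linarith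
  finally show ?thesis .
qed

lemma sq_le_sq_of_abs_le: "\<bar>x\<bar> \<le> y \<Longrightarrow> x\<^sup>2 \<le> (y::real)\<^sup>2"
  by (metis abs_ge_zero order_trans power2_abs power_mono)

section \<open>Normalizers near the optimum\<close>

locale sdp_optimum =
  fixes C :: "nat \<Rightarrow> nat \<Rightarrow> real" and n :: nat and Vs :: "nat \<Rightarrow> real^'k"
  assumes symC: "\<forall>i<n. \<forall>j<n. C i j = C j i"
    and diagC: "\<forall>i<n. C i i = 0"
    and Vs_unit: "unit_cols n Vs"
    and Vs_opt: "objf C n Vs = sdp_opt C n"
begin

abbreviation "ystar \<equiv> dual_y C n Vs"
abbreviation "S \<equiv> dual_slack C n Vs"

lemma psd_S: "psd n S"
  using symC Vs_unit Vs_opt by (rule psd_dual_slack_at_opt)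

lemma ystar_nonneg: "i < n \<Longrightarrow> 0 \<le> ystar i"
  using psd_diag_nonneg[OF psd_S, of i] diagC by (simp add: dual_slack_def)

lemma sdp_opt_eq: "sdp_opt C n = - (\<Sum>i<n. ystar i)"
  unfolding Vs_opt[symmetric] objf_def dual_y_def by (simp add: sum_negf)

lemma optimality_gap_eq:
  fixes V :: "nat \<Rightarrow> real^'k"
  assumes "unit_cols n V"
  shows "objf C n V - sdp_opt C n = (\<Sum>c\<in>UNIV. qform n S (\<lambda>j. V j $ c))"
proof -
  have "V i \<bullet> V i = 1" if "i < n" for i
    using assms that by (simp add: unit_cols_def norm_eq_1)
  then have "(\<Sum>i<n. \<Sum>j<n. S i j * (V i \<bullet> V j)) = objf C n V + (\<Sum>i<n. ystar i)"
    by (simp add: objf_def dual_slack_def distrib_right sum.distrib if_zero_mult_real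
        sum_if_zero_const_cond)
  moreover have "(\<Sum>i<n. \<Sum>j<n. S i j * (V i \<bullet> V j)) = (\<Sum>c\<in>UNIV. qform n S (\<lambda>j. V j $ c))"
    unfolding qform_def inner_vec_def inner_real_def
    by (simp add: sum_distrib_left sum.swap[of _ UNIV] algebra_simps)
  ultimately show ?thesis by (simp add: sdp_opt_eq)
qed

lemma sum_norm_slack_rows_le:
  fixes V :: "nat \<Rightarrow> real^'k"
  assumes "unit_cols n V"
  shows "(\<Sum>i<n. (norm (\<Sum>j<n. S i j *\<^sub>R V j))\<^sup>2) \<le> (\<Sum>i<n. ystar i) * (objf C n V - sdp_opt C n)"
proof -
  have "(\<Sum>i<n. (norm (\<Sum>j<n. S i j *\<^sub>R V j))\<^sup>2) = (\<Sum>i<n. \<Sum>c\<in>UNIV. (\<Sum>j<n. S i j * V j $ c)\<^sup>2)"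
    unfolding power2_norm_eq_inner inner_vec_def by (simp add: power2_eq_square sum_component)
  also have "\<dots> \<le> (\<Sum>i<n. \<Sum>c\<in>UNIV. S i i * qform n S (\<lambda>j. V j $ c))"
    by (intro sum_mono psd_row_sq_le[OF psd_S]) auto
  also have "\<dots> = (\<Sum>i<n. ystar i) * (\<Sum>c\<in>UNIV. qform n S (\<lambda>j. V j $ c))"
    using diagC by (simp add: dual_slack_def sum_distrib_right sum_distrib_left sum.swap[of _ UNIV])
  finally show ?thesis unfolding optimality_gap_eq[OF assms] .
qed

lemma slack_rows_at_opt:
  assumes "i < n"
  shows "(\<Sum>j<n. S i j *\<^sub>R Vs j) = 0"
proof -
  have "(\<Sum>i<n. (norm (\<Sum>j<n. S i j *\<^sub>R Vs j))\<^sup>2) = 0"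
    using sum_norm_slack_rows_le[OF Vs_unit] Vs_opt by (simp add: order_antisym sum_nonneg)
  with assms show ?thesis by (simp add: sum_nonneg_eq_0_iff)
qed

lemma mix_g_plus_ystar:
  assumes "i < n"
  shows "mix_g C n W i + ystar i *\<^sub>R W i = (\<Sum>j<n. S i j *\<^sub>R W j)"
proof -
  have "S i j *\<^sub>R W j = C i j *\<^sub>R W j + (if j = i then ystar i *\<^sub>R W i else 0)" for j
    by (auto simp: dual_slack_def algebra_simps)
  with assms diagC show ?thesis by (simp add: mix_g_eq_sum sum.distrib)
qed

lemma mix_g_at_opt: "i < n \<Longrightarrow> mix_g C n Vs i = - (ystar i *\<^sub>R Vs i)"
  using mix_g_plus_ystar[of i Vs] slack_rows_at_opt[of i] by (simp add: eq_neg_iff_add_eq_0)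

lemma norm_g_pass_plus_ystar_sq_le:
  fixes V :: "nat \<Rightarrow> real^'k"
  assumes i: "i < n"
  shows "(norm (g_pass upd C n V i + ystar i *\<^sub>R V i))\<^sup>2 \<le>
    2 * (norm (\<Sum>j<n. S i j *\<^sub>R V j))\<^sup>2 + 2 * (\<Sum>j<n. \<bar>C i j\<bar>)\<^sup>2 * pass_displacement upd C n V"
proof -
  define D where "D = pass_displacement upd C n V"
  define d where "d j = pass_state upd C n V i j - V j" for j
  define B where "B = (\<Sum>j<n. C i j *\<^sub>R d j)"
  have "g_pass upd C n V i = mix_g C n V i + B"
    using i diagC unfolding g_pass_def B_def d_def
    by (simp add: mix_g_eq_sum scaleR_diff_right sum_subtractf)
  then have split: "g_pass upd C n V i + ystar i *\<^sub>R V i = (\<Sum>j<n. S i j *\<^sub>R V j) + B"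
    using mix_g_plus_ystar[OF i, of V] by (simp add: algebra_simps)
  have "norm (d j) \<le> sqrt D" if "j < n" for j
  proof (cases "j < i")
    case True
    then have "pass_state upd C n V i j = pass_state upd C n V (Suc j) j"
      by (subst pass_state_apply) simp
    then have "(norm (d j))\<^sup>2 = (norm (pass_state upd C n V (Suc j) j - V j))\<^sup>2"
      by (simp add: d_def)
    also have "\<dots> \<le> D"
      unfolding D_def pass_displacement_def using that by (intro member_le_sum) auto
    finally have "(norm (d j))\<^sup>2 \<le> D" .
    then show ?thesis by (rule real_le_rsqrt)
  next
    case False
    then have "pass_state upd C n V i j = V j" by (subst pass_state_apply) simp
    then show ?thesis by (simp add: d_def D_def pass_displacement_def sum_nonneg)
  qed
  then have "norm B \<le> (\<Sum>j<n. \<bar>C i j\<bar>) * sqrt D"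
    unfolding B_def sum_distrib_right
    by (intro order_trans[OF norm_sum] sum_mono) (simp add: mult_left_mono)
  then have "(norm B)\<^sup>2 \<le> ((\<Sum>j<n. \<bar>C i j\<bar>) * sqrt D)\<^sup>2"
    by (rule power_mono) simp
  also have "\<dots> = (\<Sum>j<n. \<bar>C i j\<bar>)\<^sup>2 * D"
    by (simp add: power_mult_distrib D_def pass_displacement_def sum_nonneg)
  finally have "(norm B)\<^sup>2 \<le> (\<Sum>j<n. \<bar>C i j\<bar>)\<^sup>2 * D" .
  with norm_add_sq_le[of "\<Sum>j<n. S i j *\<^sub>R V j" B] show ?thesis
    unfolding split D_def by linarith
qed

lemma sum_norm_g_pass_plus_ystar_sq_le:
  fixes V :: "nat \<Rightarrow> real^'k"
  assumes unit: "unit_cols n V" and \<kappa>: "0 < \<kappa>"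
    and disp: "\<kappa> * pass_displacement upd C n V \<le> objf C n V - sdp_opt C n"
  shows "(\<Sum>i<n. (norm (g_pass upd C n V i + ystar i *\<^sub>R V i))\<^sup>2) \<le>
    (2 * (\<Sum>i<n. ystar i) + 2 * (\<Sum>i<n. (\<Sum>j<n. \<bar>C i j\<bar>)\<^sup>2) / \<kappa>) * (objf C n V - sdp_opt C n)"
proof -
  define E where "E = objf C n V - sdp_opt C n"
  define K where "K = (\<Sum>i<n. (\<Sum>j<n. \<bar>C i j\<bar>)\<^sup>2)"
  have "(\<Sum>i<n. (norm (g_pass upd C n V i + ystar i *\<^sub>R V i))\<^sup>2) \<le>
      (\<Sum>i<n. 2 * (norm (\<Sum>j<n. S i j *\<^sub>R V j))\<^sup>2
        + 2 * (\<Sum>j<n. \<bar>C i j\<bar>)\<^sup>2 * pass_displacement upd C n V)"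
    by (intro sum_mono norm_g_pass_plus_ystar_sq_le) simp
  also have "\<dots> = 2 * (\<Sum>i<n. (norm (\<Sum>j<n. S i j *\<^sub>R V j))\<^sup>2) + 2 * K * pass_displacement upd C n V"
    by (simp add: K_def sum.distrib sum_distrib_left sum_distrib_right)
  also have "\<dots> \<le> 2 * ((\<Sum>i<n. ystar i) * E) + 2 * K * (E / \<kappa>)"
    using sum_norm_slack_rows_le[OF unit] disp \<kappa>
    by (intro add_mono mult_left_mono) (auto simp: E_def K_def field_simps sum_nonneg)
  finally show ?thesis by (simp add: E_def K_def algebra_simps)
qed

lemma ex_normalizer_bound:
  fixes y :: "(nat \<Rightarrow> real^'k) \<Rightarrow> nat \<Rightarrow> real"
  assumes \<kappa>: "0 < \<kappa>" and c: "0 \<le> c"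
    and descent: "\<And>V. P V \<Longrightarrow>
      unit_cols n V \<and> \<kappa> * pass_displacement upd C n V \<le> objf C n V - sdp_opt C n"
    and normalizer: "\<And>V i. P V \<Longrightarrow> i < n \<Longrightarrow>
      \<bar>y V i - y Vs i\<bar> \<le> c * norm (g_pass upd C n V i + ystar i *\<^sub>R V i)"
  shows "\<exists>\<tau>>0. \<forall>V. P V \<longrightarrow> (\<Sum>i<n. (y V i - y Vs i)\<^sup>2) \<le> \<tau> * (objf C n V - sdp_opt C n)"
proof -
  define \<tau> where "\<tau> = c\<^sup>2 * (2 * (\<Sum>i<n. ystar i) + 2 * (\<Sum>i<n. (\<Sum>j<n. \<bar>C i j\<bar>)\<^sup>2) / \<kappa>)"
  have "0 \<le> (\<Sum>i<n. ystar i)" by (intro sum_nonneg ystar_nonneg) simp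
  moreover have "0 \<le> (\<Sum>i<n. (\<Sum>j<n. \<bar>C i j\<bar>)\<^sup>2) / \<kappa>" using \<kappa> by (simp add: sum_nonneg)
  ultimately have "0 \<le> \<tau>" by (simp add: \<tau>_def)
  have "(\<Sum>i<n. (y V i - y Vs i)\<^sup>2) \<le> (\<tau> + 1) * (objf C n V - sdp_opt C n)" if "P V" for V
  proof -
    from descent[OF that] have unit: "unit_cols n V"
      and disp: "\<kappa> * pass_displacement upd C n V \<le> objf C n V - sdp_opt C n" by auto
    have "(y V i - y Vs i)\<^sup>2 \<le> c\<^sup>2 * (norm (g_pass upd C n V i + ystar i *\<^sub>R V i))\<^sup>2"
      if "i < n" for i
      using sq_le_sq_of_abs_le[OF normalizer[OF \<open>P V\<close> that]] by (simp add: power_mult_distrib)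
    then have "(\<Sum>i<n. (y V i - y Vs i)\<^sup>2) \<le> (\<Sum>i<n. c\<^sup>2 * (norm (g_pass upd C n V i + ystar i *\<^sub>R V i))\<^sup>2)"
      by (intro sum_mono) simp
    also have "\<dots> \<le> \<tau> * (objf C n V - sdp_opt C n)"
      using sum_norm_g_pass_plus_ystar_sq_le[OF unit \<kappa> disp]
      by (simp add: \<tau>_def sum_distrib_left[symmetric] mult_left_mono mult.assoc)
    also have "\<dots> \<le> (\<tau> + 1) * (objf C n V - sdp_opt C n)"
      using sdp_opt_le_objf[OF unit, of C] by (simp add: distrib_right)
    finally show ?thesis .
  qed
  with \<open>0 \<le> \<tau>\<close> show ?thesis by (intro exI[of _ "\<tau> + 1"]) auto
qed

lemma norm_ystar_scaleR: "i < n \<Longrightarrow> unit_cols n W \<Longrightarrow> norm (ystar i *\<^sub>R W i) = ystar i"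
  using ystar_nonneg[of i] by (simp add: unit_cols_def)

lemma pass_state_updM_at_opt:
  assumes \<delta>: "0 < \<delta>" and nondeg_opt: "nondegM \<delta> C n Vs" and "m \<le> n"
  shows "pass_state updM C n Vs m = Vs"
proof (rule pass_state_fixed[OF _ \<open>m \<le> n\<close>])
  fix m assume m: "m < n" and "pass_state updM C n Vs m = Vs"
  then have "norm (g_pass updM C n Vs m) = ystar m"
    using Vs_unit by (simp add: g_pass_def mix_g_at_opt norm_ystar_scaleR del: norm_scaleR)
  moreover have "\<delta> \<le> norm (g_pass updM C n Vs m)"
    using nondeg_opt m by (simp add: nondegM_def)
  ultimately have "0 < ystar m" using \<delta> by simp
  with m Vs_unit show "updM (mix_g C n Vs m) (Vs m) = Vs m"
    by (simp add: updM_def mix_g_at_opt norm_ystar_scaleR unit_cols_def)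
qed

lemma yM_at_opt:
  assumes "0 < \<delta>" "nondegM \<delta> C n Vs" "i < n"
  shows "yM C n Vs i = ystar i"
  using assms Vs_unit
  by (simp add: yM_def g_pass_def pass_state_updM_at_opt mix_g_at_opt norm_ystar_scaleR del: norm_scaleR)

lemma updT_step_at_opt: "i < n \<Longrightarrow> Vs i - \<theta> *\<^sub>R mix_g C n Vs i = (1 + \<theta> * ystar i) *\<^sub>R Vs i"
  by (simp add: mix_g_at_opt algebra_simps)

lemma norm_updT_step_at_opt:
  assumes "0 \<le> \<theta>" "i < n" "unit_cols n W"
  shows "norm ((1 + \<theta> * ystar i) *\<^sub>R W i) = 1 + \<theta> * ystar i"
  using assms ystar_nonneg[OF assms(2)] by (simp add: unit_cols_def)

lemma pass_state_updT_at_opt: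
  assumes \<theta>: "0 \<le> \<theta>" and "m \<le> n"
  shows "pass_state (updT \<theta>) C n Vs m = Vs"
proof (rule pass_state_fixed[OF _ \<open>m \<le> n\<close>])
  fix m assume m: "m < n"
  have "0 < 1 + \<theta> * ystar m" using \<theta> ystar_nonneg[OF m] by (simp add: add_pos_nonneg)
  then show "updT \<theta> (mix_g C n Vs m) (Vs m) = Vs m"
    unfolding updT_def updT_step_at_opt[OF m] norm_updT_step_at_opt[OF \<theta> m Vs_unit] by simp
qed

lemma yT_at_opt: "0 \<le> \<theta> \<Longrightarrow> i < n \<Longrightarrow> yT \<theta> C n Vs i = 1 + \<theta> * ystar i"
  unfolding yT_def g_pass_def
  by (simp only: pass_state_updT_at_opt updT_step_at_opt norm_updT_step_at_opt Vs_unit less_imp_le)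

lemma normalizer_bound_updM:
  assumes \<delta>: "0 < \<delta>" and nondeg_opt: "nondegM \<delta> C n Vs"
  shows "\<exists>\<tau>>0. \<forall>V::nat \<Rightarrow> real^'k. unit_cols n V \<and> nondegM \<delta> C n V \<longrightarrow>
    (\<Sum>i<n. (yM C n V i - yM C n Vs i)\<^sup>2) \<le> \<tau> * (objf C n V - sdp_opt C n)"
proof (rule ex_normalizer_bound[OF \<delta>, of 1])
  fix V :: "nat \<Rightarrow> real^'k"
  assume "unit_cols n V \<and> nondegM \<delta> C n V"
  then have unit: "unit_cols n V" and nondeg: "nondegM \<delta> C n V" by auto
  have "\<delta> * pass_displacement updM C n V \<le> objf C n V - sdp_opt C n"
    using symC diagC unit
    by (rule pass_displacement_le) (use nondeg unit \<delta> in \<open>auto simp: nondegM_def unit_cols_def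
        intro!: sufficient_decrease_updM\<close>)
  with unit show "unit_cols n V \<and> \<delta> * pass_displacement updM C n V \<le> objf C n V - sdp_opt C n"
    by simp
  fix i assume i: "i < n"
  have "yM C n Vs i = norm (- (ystar i *\<^sub>R V i))"
    using yM_at_opt[OF \<delta> nondeg_opt i] norm_ystar_scaleR[OF i unit] by simp
  then show "\<bar>yM C n V i - yM C n Vs i\<bar> \<le> 1 * norm (g_pass updM C n V i + ystar i *\<^sub>R V i)"
    using norm_triangle_ineq3[of "g_pass updM C n V i" "- (ystar i *\<^sub>R V i)"]
    by (simp add: yM_def)
qed simp

lemma normalizer_bound_updT:
  assumes \<theta>: "0 < \<theta>" and \<theta>C: "\<forall>i<n. \<theta> * (\<Sum>j<n. \<bar>C j i\<bar>) < 1"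
  shows "\<exists>\<tau>>0. \<forall>V::nat \<Rightarrow> real^'k. unit_cols n V \<longrightarrow>
    (\<Sum>i<n. (yT \<theta> C n V i - yT \<theta> C n Vs i)\<^sup>2) \<le> \<tau> * (objf C n V - sdp_opt C n)"
proof (rule ex_normalizer_bound[of "1 / \<theta>" \<theta>])
  fix V :: "nat \<Rightarrow> real^'k"
  assume unit: "unit_cols n V"
  have "1 / \<theta> * pass_displacement (updT \<theta>) C n V \<le> objf C n V - sdp_opt C n"
    using symC diagC unit
  proof (rule pass_displacement_le)
    fix m assume "m < n" "unit_cols n (pass_state (updT \<theta>) C n V m)"
    with unit \<theta> show "sufficient_decrease (1 / \<theta>) (updT \<theta>) (g_pass (updT \<theta>) C n V m) (V m)"
      unfolding g_pass_def
      by (intro sufficient_decrease_updT step_size_norm_mix_g_less[OF symC _ \<theta>C])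
        (auto simp: unit_cols_def)
  qed
  with unit show "unit_cols n V \<and> 1 / \<theta> * pass_displacement (updT \<theta>) C n V \<le> objf C n V - sdp_opt C n"
    by simp
  fix i assume i: "i < n"
  have "V i - \<theta> *\<^sub>R g_pass (updT \<theta>) C n V i - (1 + \<theta> * ystar i) *\<^sub>R V i
      = - (\<theta> *\<^sub>R (g_pass (updT \<theta>) C n V i + ystar i *\<^sub>R V i))"
    by (simp add: algebra_simps)
  moreover have "yT \<theta> C n Vs i = norm ((1 + \<theta> * ystar i) *\<^sub>R V i)"
    using \<theta> by (simp only: yT_at_opt norm_updT_step_at_opt i unit less_imp_le)
  ultimately show "\<bar>yT \<theta> C n V i - yT \<theta> C n Vs i\<bar> \<le> \<theta> * norm (g_pass (updT \<theta>) C n V i + ystar i *\<^sub>R V i)"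
    using norm_triangle_ineq3[of "V i - \<theta> *\<^sub>R g_pass (updT \<theta>) C n V i" "(1 + \<theta> * ystar i) *\<^sub>R V i"] \<theta>
    by (simp add: yT_def)
qed (use \<theta> in auto)

end

theorem lemma19:
  fixes C :: "nat \<Rightarrow> nat \<Rightarrow> real" and n :: nat and Vs :: "nat \<Rightarrow> real^'k"
    and \<delta> \<theta> :: real
  assumes symC: "\<forall>i<n. \<forall>j<n. C i j = C j i"
    and diagC: "\<forall>i<n. C i i = 0"
    and Vs_unit: "unit_cols n Vs"
    and Vs_opt: "objf C n Vs = sdp_opt C n"
  shows "(0 < \<delta> \<and> nondegM \<delta> C n Vs \<longrightarrow>
           (\<exists>\<tau>>0. \<forall>V::nat \<Rightarrow> real^'k. unit_cols n V \<and> nondegM \<delta> C n V \<longrightarrow>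
              (\<Sum>i<n. (yM C n V i - yM C n Vs i)\<^sup>2) \<le> \<tau> * (objf C n V - sdp_opt C n)))
       \<and> (0 < \<theta> \<and> (\<forall>i<n. \<theta> * (\<Sum>j<n. \<bar>C j i\<bar>) < 1) \<longrightarrow>
           (\<exists>\<tau>>0. \<forall>V::nat \<Rightarrow> real^'k. unit_cols n V \<longrightarrow>
              (\<Sum>i<n. (yT \<theta> C n V i - yT \<theta> C n Vs i)\<^sup>2) \<le> \<tau> * (objf C n V - sdp_opt C n)))"
proof -
  interpret sdp_optimum C n Vs
    using symC diagC Vs_unit Vs_opt by unfold_locales
  show ?thesis
    using normalizer_bound_updM normalizer_bound_updT by blast
qed

end
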